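(* Let $G$ be a locally compact abelian group with dual group $\Gamma$, and let $(\mu,\nu)$ be a spectral pair of positive Borel measures on $(G,\Gamma)$. If there exists a sequence of $\mu$-measurable sets $A_n\subset G$ with $\mu(A_n)\ne0$ for all $n$ and $\mu(A_n)\to0$, then $\nu(\Gamma)=+\infty$.
   Context: $G$ is written additively; $\Gamma=\hat G$ is the group of continuous homomorphisms $G\to\mathbb{T}$ (unit circle in $\mathbb{C}$). Write $\langle x,\xi\rangle$ for the pairing, $e_\xi(x)=\langle x,\xi\rangle$. $(\mu,\nu)$ is a spectral pair if, with $(Ff)(\xi)=\int_G f(x)\overline{e_\xi(x)}\,d\mu(x)$ for $f\in\mathcal{L}^1\cap\mathcal{L}^2(\mu)$, the set $\{Ff\}$ is dense in $\mathcal{L}^2(\nu)$ and $\int_\Gamma|Ff|^2d\nu=\int_G|f|^2d\mu$ for all such $f$. *)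

theory Defs
  imports "HOL-Analysis.Analysis" "HOL-Probability.Probability"
begin

definition LCA_group :: "'g::{topological_ab_group_add, t2_space} itself \<Rightarrow> bool" where
  "LCA_group _ \<longleftrightarrow> locally_compact_space (euclidean :: 'g topology)"

definition dual_group :: "('g::topological_ab_group_add \<Rightarrow> complex) set" where
  "dual_group = {\<xi>. continuous_on UNIV \<xi> \<and> (\<forall>x. norm (\<xi> x) = 1) \<and>
                     (\<forall>x y. \<xi> (x + y) = \<xi> x * \<xi> y)}"

definition dual_topology :: "('g::topological_ab_group_add \<Rightarrow> complex) topology" where
  "dual_topology = topology_generated_by
     {{\<xi> \<in> dual_group. \<xi> ` K \<subseteq> U} | K U. compact K \<and> open U}"

definition borel_of :: "'a topology \<Rightarrow> 'a measure" where
  "borel_of X = sigma (topspace X) {U. openin X U}"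

definition fourier :: "'g measure \<Rightarrow> ('g \<Rightarrow> complex) \<Rightarrow> ('g \<Rightarrow> complex) \<Rightarrow> complex" where
  "fourier \<mu> f \<xi> = (\<integral>x. f x * cnj (\<xi> x) \<partial>\<mu>)"

definition L2 :: "'a measure \<Rightarrow> ('a \<Rightarrow> complex) \<Rightarrow> bool" where
  "L2 M f \<longleftrightarrow> f \<in> borel_measurable M \<and> (\<integral>\<^sup>+x. ennreal ((norm (f x))\<^sup>2) \<partial>M) < \<infinity>"

definition L1L2 :: "'a measure \<Rightarrow> ('a \<Rightarrow> complex) \<Rightarrow> bool" where
  "L1L2 M f \<longleftrightarrow> integrable M f \<and> L2 M f"

definition spectral_pair ::
  "'g::{topological_ab_group_add, t2_space} measure \<Rightarrow> ('g \<Rightarrow> complex) measure \<Rightarrow> bool" where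
  "spectral_pair \<mu> \<nu> \<longleftrightarrow>
     sets \<mu> = sets borel \<and>
     sets \<nu> = sets (borel_of dual_topology) \<and>
     (\<forall>f. L1L2 \<mu> f \<longrightarrow>
        L2 \<nu> (fourier \<mu> f) \<and>
        (\<integral>\<^sup>+\<xi>. ennreal ((norm (fourier \<mu> f \<xi>))\<^sup>2) \<partial>\<nu>) = (\<integral>\<^sup>+x. ennreal ((norm (f x))\<^sup>2) \<partial>\<mu>)) \<and>
     (\<forall>g e. L2 \<nu> g \<and> e > 0 \<longrightarrow>
        (\<exists>f. L1L2 \<mu> f \<and> (\<integral>\<^sup>+\<xi>. ennreal ((norm (fourier \<mu> f \<xi> - g \<xi>))\<^sup>2) \<partial>\<nu>) < ennreal e))"

end

theory Submission
  imports Defs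
begin

text \<open>Plancherel applied to the indicator of a set \<open>B\<close> of finite positive \<open>\<mu>\<close>-measure gives
  \<open>\<mu>(B) = \<integral>|F 1\<^sub>B|\<^sup>2 d\<nu>\<close>; since characters are unimodular, \<open>|F 1\<^sub>B| \<le> \<mu>(B)\<close>, so
  \<open>\<mu>(B) \<le> \<mu>(B)\<^sup>2 \<nu>(\<Gamma>)\<close>, i.e. \<open>\<nu>(\<Gamma>) \<ge> 1/\<mu>(B)\<close>. Letting \<open>B\<close> run through the sets \<open>A\<^sub>n\<close>
  forces \<open>\<nu>(\<Gamma>) = \<infinity>\<close>.\<close>

lemma space_subset_dual_group:
  fixes \<nu> :: "('g::topological_ab_group_add \<Rightarrow> complex) measure"
  assumes "sets \<nu> = sets (borel_of dual_topology)"
  shows "space \<nu> \<subseteq> dual_group"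
proof -
  have "space \<nu> = space (borel_of (dual_topology :: ('g \<Rightarrow> complex) topology))"
    using assms by (rule sets_eq_imp_space_eq)
  also have "\<dots> = topspace (dual_topology :: ('g \<Rightarrow> complex) topology)"
    by (simp add: borel_of_def space_measure_of_conv)
  also have "\<dots> \<subseteq> dual_group"
    by (auto simp: dual_topology_def)
  finally show ?thesis .
qed

lemma norm_fourier_le_integral_norm:
  assumes "\<xi> \<in> dual_group"
  shows "norm (fourier \<mu> f \<xi>) \<le> (\<integral>x. norm (f x) \<partial>\<mu>)"
proof -
  have "norm (\<xi> x) = 1" for x
    using assms by (simp add: dual_group_def)
  then have "(\<integral>x. norm (f x * cnj (\<xi> x)) \<partial>\<mu>) = (\<integral>x. norm (f x) \<partial>\<mu>)"
    by (simp add: norm_mult)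
  then show ?thesis
    unfolding fourier_def by (metis integral_norm_bound)
qed

lemma nn_integral_norm_indicator_squared:
  assumes "B \<in> sets M"
  shows "(\<integral>\<^sup>+x. ennreal ((norm (indicator B x :: complex))\<^sup>2) \<partial>M) = emeasure M B"
proof -
  have "(\<integral>\<^sup>+x. ennreal ((norm (indicator B x :: complex))\<^sup>2) \<partial>M) = (\<integral>\<^sup>+x. indicator B x \<partial>M)"
    by (rule nn_integral_cong) (simp add: indicator_def)
  also have "\<dots> = emeasure M B"
    using assms by simp
  finally show ?thesis .
qed

lemma L1L2_indicator:
  assumes "B \<in> sets M" and "emeasure M B < \<infinity>"
  shows "L1L2 M (indicator B)"
proof -
  have "integrable M (\<lambda>x. complex_of_real (indicator B x))"
    using assms by (intro integrable_of_real integrable_real_indicator)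
  then have "integrable M (indicator B :: _ \<Rightarrow> complex)"
    by (simp add: of_real_indicator)
  then show ?thesis
    using assms nn_integral_norm_indicator_squared[OF assms(1)] by (simp add: L1L2_def L2_def)
qed

lemma spectral_pair_measure_le_square_mult:
  assumes sp: "spectral_pair \<mu> \<nu>"
    and B: "B \<in> sets \<mu>" "emeasure \<mu> B < \<infinity>"
  shows "emeasure \<mu> B \<le> (emeasure \<mu> B)\<^sup>2 * emeasure \<nu> (space \<nu>)"
proof -
  have fourier_bound: "norm (fourier \<mu> (indicator B) \<xi>) \<le> measure \<mu> B" if "\<xi> \<in> space \<nu>" for \<xi>
  proof -
    have "\<xi> \<in> dual_group"
      using sp that space_subset_dual_group by (auto simp: spectral_pair_def)
    then have "norm (fourier \<mu> (indicator B) \<xi>) \<le> (\<integral>x. norm (indicator B x :: complex) \<partial>\<mu>)"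
      by (rule norm_fourier_le_integral_norm)
    also have "(\<lambda>x. norm (indicator B x :: complex)) = indicator B"
      by (simp add: fun_eq_iff split: split_indicator)
    also have "integral\<^sup>L \<mu> (indicator B) = measure \<mu> B"
      using B by (simp add: sets.Int_space_eq2)
    finally show ?thesis .
  qed
  have "emeasure \<mu> B = (\<integral>\<^sup>+\<xi>. ennreal ((norm (fourier \<mu> (indicator B) \<xi>))\<^sup>2) \<partial>\<nu>)"
    using sp L1L2_indicator[OF B] nn_integral_norm_indicator_squared[OF B(1)]
    by (simp add: spectral_pair_def)
  also have "\<dots> \<le> (\<integral>\<^sup>+\<xi>. ennreal ((measure \<mu> B)\<^sup>2) \<partial>\<nu>)"
    by (rule nn_integral_mono) (auto intro!: power_mono fourier_bound)
  also have "\<dots> = (emeasure \<mu> B)\<^sup>2 * emeasure \<nu> (space \<nu>)"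
    using B by (simp add: emeasure_eq_ennreal_measure ennreal_power)
  finally show ?thesis .
qed

lemma spectral_pair_inverse_measure_le:
  assumes sp: "spectral_pair \<mu> \<nu>"
    and B: "B \<in> sets \<mu>" "emeasure \<mu> B \<noteq> 0"
  shows "inverse (emeasure \<mu> B) \<le> emeasure \<nu> (space \<nu>)"
proof (cases "emeasure \<mu> B = \<infinity>")
  case False
  let ?a = "emeasure \<mu> B" and ?c = "emeasure \<nu> (space \<nu>)"
  have a_finite: "?a < \<infinity>"
    using False by (simp add: top.not_eq_extremum)
  have "?a * 1 \<le> ?a * (?a * ?c)"
    using spectral_pair_measure_le_square_mult[OF sp B(1) a_finite]
    by (simp add: power2_eq_square mult.assoc)
  then have "1 \<le> ?a * ?c"
    using B(2) a_finite by (subst (asm) ennreal_mult_le_mult_iff) auto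
  then have "inverse ?a * 1 \<le> inverse ?a * (?a * ?c)"
    by (rule mult_left_mono) simp
  also have "\<dots> = (?a / ?a) * ?c"
    by (simp add: divide_ennreal_def ac_simps)
  also have "\<dots> = ?c"
    using B(2) a_finite by simp
  finally show ?thesis by simp
qed simp

lemma ennreal_inverse_tendsto_top:
  assumes "(f \<longlongrightarrow> (0::ennreal)) F"
  shows "((\<lambda>n. inverse (f n)) \<longlongrightarrow> \<infinity>) F"
proof -
  have "isCont (inverse :: ennreal \<Rightarrow> ennreal) 0"
    using continuous_on_inverse_ennreal[OF continuous_on_id, of UNIV]
    by (simp add: continuous_on_eq_continuous_at)
  from isCont_tendsto_compose[OF this assms] show ?thesis
    by simp
qed

theorem corollaryA12:
  fixes \<mu> :: "'g::{topological_ab_group_add, t2_space} measure"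
    and \<nu> :: "('g \<Rightarrow> complex) measure"
    and A :: "nat \<Rightarrow> 'g set"
  assumes "LCA_group TYPE('g)"
    and "spectral_pair \<mu> \<nu>"
    and "\<And>n. A n \<in> sets \<mu>"
    and "\<And>n. emeasure \<mu> (A n) \<noteq> 0"
    and "(\<lambda>n. emeasure \<mu> (A n)) \<longlonglongrightarrow> 0"
  shows "emeasure \<nu> (space \<nu>) = \<infinity>"
proof -
  have lim: "(\<lambda>n. inverse (emeasure \<mu> (A n))) \<longlonglongrightarrow> \<infinity>"
    using assms(5) by (rule ennreal_inverse_tendsto_top)
  have bound: "inverse (emeasure \<mu> (A n)) \<le> emeasure \<nu> (space \<nu>)" for n
    using assms(2-4) by (rule spectral_pair_inverse_measure_le)
  have "\<infinity> \<le> emeasure \<nu> (space \<nu>)"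
    by (rule LIMSEQ_le_const2[OF lim]) (use bound in blast)
  then show ?thesis
    by (simp add: top_unique)
qed

end
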